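(* Let $k,n$ be integers with $k\geq 4$ and $n\geq 2$, and let $c$ be an exact $k$-coloring of $\mathcal{B}_n$ with $c(\emptyset)\neq c([n])$. If $\mathcal{B}_n$ contains no rainbow induced copy of $\mathcal{B}_2$, then any two sets $X,Y$ with $c(X),c(Y)\notin\{c(\emptyset),c([n])\}$ and $c(X)\neq c(Y)$ are comparable.
   Context: $\mathcal{B}_n$ is the Boolean lattice of subsets of $[n]$ under inclusion. An exact $k$-coloring is a surjective map $c:\mathcal{B}_n\to[k]$. A rainbow induced copy of $\mathcal{B}_2$ is four sets $W_1,W_2,W_3,W_4$ with $W_1\subsetneq W_2\subsetneq W_4$, $W_1\subsetneq W_3\subsetneq W_4$, $W_2,W_3$ incomparable, and pairwise distinct colors. *)

theory Defs
  imports Main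
begin

definition boolean_lattice :: "nat \<Rightarrow> nat set set" where
  "boolean_lattice n = Pow {1..n}"

definition exact_coloring :: "nat \<Rightarrow> nat \<Rightarrow> (nat set \<Rightarrow> nat) \<Rightarrow> bool" where
  "exact_coloring n k c \<longleftrightarrow> c ` boolean_lattice n = {1..k}"

definition rainbow_B2 :: "nat \<Rightarrow> (nat set \<Rightarrow> nat) \<Rightarrow> nat set \<Rightarrow> nat set \<Rightarrow> nat set \<Rightarrow> nat set \<Rightarrow> bool" where
  "rainbow_B2 n c W1 W2 W3 W4 \<longleftrightarrow>
     W1 \<in> boolean_lattice n \<and> W2 \<in> boolean_lattice n \<and> W3 \<in> boolean_lattice n \<and> W4 \<in> boolean_lattice n \<and>
     W1 \<subset> W2 \<and> W2 \<subset> W4 \<and> W1 \<subset> W3 \<and> W3 \<subset> W4 \<and>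
     \<not> W2 \<subseteq> W3 \<and> \<not> W3 \<subseteq> W2 \<and>
     distinct [c W1, c W2, c W3, c W4]"

definition has_rainbow_B2 :: "nat \<Rightarrow> (nat set \<Rightarrow> nat) \<Rightarrow> bool" where
  "has_rainbow_B2 n c \<longleftrightarrow> (\<exists>W1 W2 W3 W4. rainbow_B2 n c W1 W2 W3 W4)"

end

theory Submission
  imports Defs
begin

lemma incomparable_between_bottom_top:
  assumes "X \<in> boolean_lattice n" and "Y \<in> boolean_lattice n"
    and "\<not> (X \<subseteq> Y \<or> Y \<subseteq> X)"
  shows "{} \<subset> X" and "X \<subset> {1..n}"
  using assms by (auto simp: boolean_lattice_def)

lemma rainbow_B2_bottom_top:
  assumes "X \<in> boolean_lattice n" and "Y \<in> boolean_lattice n"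
    and "\<not> (X \<subseteq> Y \<or> Y \<subseteq> X)"
    and "distinct [c {}, c X, c Y, c {1..n}]"
  shows "rainbow_B2 n c {} X Y {1..n}"
proof -
  have "{} \<subset> X" "X \<subset> {1..n}"
    using incomparable_between_bottom_top[OF assms(1-3)] by blast+
  moreover have "{} \<subset> Y" "Y \<subset> {1..n}"
    using incomparable_between_bottom_top[OF assms(2,1)] assms(3) by blast+
  moreover have "{} \<in> boolean_lattice n" "{1..n} \<in> boolean_lattice n"
    by (auto simp: boolean_lattice_def)
  ultimately show ?thesis
    using assms unfolding rainbow_B2_def by blast
qed

theorem lemma2p6:
  fixes k n :: nat and c :: "nat set \<Rightarrow> nat"
  assumes "k \<ge> 4" and "n \<ge> 2"
    and "exact_coloring n k c"
    and "c {} \<noteq> c {1..n}"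
    and "\<not> has_rainbow_B2 n c"
    and "X \<in> boolean_lattice n" and "Y \<in> boolean_lattice n"
    and "c X \<notin> {c {}, c {1..n}}" and "c Y \<notin> {c {}, c {1..n}}"
    and "c X \<noteq> c Y"
  shows "X \<subseteq> Y \<or> Y \<subseteq> X"
proof (rule ccontr)
  assume "\<not> (X \<subseteq> Y \<or> Y \<subseteq> X)"
  moreover have "distinct [c {}, c X, c Y, c {1..n}]"
    using assms(4,8-10) by auto
  ultimately have "rainbow_B2 n c {} X Y {1..n}"
    using rainbow_B2_bottom_top assms(6,7) by blast
  with assms(5) show False
    unfolding has_rainbow_B2_def by blast
qed

end
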